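(* Assume the loss $\ell(\mathbf{y},\cdot)$ is $L$-Lipschitz for all $\mathbf{y}$ and takes values in $[0,B]$, and the $T$ source tasks are independently drawn from a task distribution $\mathcal{D}_{\text{task}}$. Let $\widehat{\mathrm{Alg}}$ be the empirical minimizer of the ICL-ERM objective over the source tasks and $\mathcal{T}\sim\mathcal{D}_{\text{task}}$. Then with probability at least $1-2\delta$, the expected excess transfer learning risk obeys \[ \mathbb{E}_{\mathcal{T}}[R_\mathcal{T}(\widehat{\mathrm{Alg}})]\leq\min_{\varepsilon\geq0}\left\{4L\varepsilon+B\sqrt{\frac{2\log(\mathcal{N}(\mathcal{A},\rho,\varepsilon)/\delta)}{T}}\right\}. \]
   Context: Algorithms $\mathrm{Alg}\in\mathcal{A}$ map a sequence $\mathcal{S}^{(i)}=(\mathbf{x}_j,\mathbf{y}_j)_{j=1}^{i}$ to predictors $f^{\mathrm{Alg}}_{\mathcal{S}^{(i)}}$. Source task $t$ has sequence $\mathcal{S}_t=(\mathbf{x}_{ti},\mathbf{y}_{ti})_{i=1}^n$ i.i.d. from $\mathcal{D}_t$; $\widehat{\mathcal{L}}_t(\mathrm{Alg})=\frac1n\sum_{i}\ell(\mathbf{y}_{ti},f^{\mathrm{Alg}}_{\mathcal{S}_t^{(i-1)}}(\mathbf{x}_{ti}))$ and ICL-ERM is $\widehat{\mathrm{Alg}}=\arg\min_{\mathrm{Alg}}\frac1T\sum_t\widehat{\mathcal{L}}_t(\mathrm{Alg})$. For a target task $\mathcal{T}$ with sequence $\mathcal{S}_\mathcal{T}=(\mathbf{x}_i,\mathbf{y}_i)_{i=1}^n\sim\mathcal{D}_\mathcal{T}$,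 $\widehat{\mathcal{L}}_\mathcal{T}(\mathrm{Alg})=\frac1n\sum_i\ell(\mathbf{y}_i,f^{\mathrm{Alg}}_{\mathcal{S}^{(i-1)}_\mathcal{T}}(\mathbf{x}_i))$, $\mathcal{L}_\mathcal{T}=\mathbb{E}_{\mathcal{S}_\mathcal{T}}[\widehat{\mathcal{L}}_\mathcal{T}]$, and $\mathbb{E}_{\mathcal{T}}[R_\mathcal{T}(\widehat{\mathrm{Alg}})]:=\mathbb{E}_{\mathcal{T}}[\mathcal{L}_\mathcal{T}(\widehat{\mathrm{Alg}})]-\min_{\mathrm{Alg}\in\mathcal{A}}\mathbb{E}_{\mathcal{T}}[\mathcal{L}_\mathcal{T}(\mathrm{Alg})]$. $\rho(\mathrm{Alg},\mathrm{Alg}')=\sup_{\mathcal{S}}\frac1n\sum_{i=1}^n\|f^{\mathrm{Alg}}_{\mathcal{S}^{(i-1)}}(\mathbf{x}_i)-f^{\mathrm{Alg}'}_{\mathcal{S}^{(i-1)}}(\mathbf{x}_i)\|_2$ over worst-case admissible sequences, and $\mathcal{N}(\mathcal{A},\rho,\varepsilon)$ is the $\varepsilon$-covering number. *)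

theory Defs
  imports "HOL-Probability.Probability"
begin

type_synonym ('x, 'y, 'p) icl_alg = "('x \<times> 'y) list \<Rightarrow> 'x \<Rightarrow> 'p"

text \<open>Sequences of length n are modelled as functions s :: nat => 'x * 'y (only
  indices i < n matter).  The prefix S^(i-1) of the paper (0-based index i here)
  is map s [0..<i].\<close>

definition emp_loss ::
  "('y \<Rightarrow> 'p \<Rightarrow> real) \<Rightarrow> nat \<Rightarrow> ('x, 'y, 'p) icl_alg \<Rightarrow> (nat \<Rightarrow> 'x \<times> 'y) \<Rightarrow> real" where
  "emp_loss l n alg s =
     (1 / real n) * (\<Sum>i<n. l (snd (s i)) (alg (map s [0..<i]) (fst (s i))))"

definition task_seq_dist :: "('task \<Rightarrow> ('x \<times> 'y) measure) \<Rightarrow> nat \<Rightarrow> 'task \<Rightarrow> (nat \<Rightarrow> 'x \<times> 'y) measure" where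
  "task_seq_dist D n \<tau> = PiM {..<n} (\<lambda>_. D \<tau>)"

definition source_seq_dist :: "'task measure \<Rightarrow> ('task \<Rightarrow> ('x \<times> 'y) measure) \<Rightarrow> nat \<Rightarrow> (nat \<Rightarrow> 'x \<times> 'y) measure" where
  "source_seq_dist DT D n = DT \<bind> task_seq_dist D n"

definition source_sample_dist :: "'task measure \<Rightarrow> ('task \<Rightarrow> ('x \<times> 'y) measure) \<Rightarrow> nat \<Rightarrow> nat \<Rightarrow> (nat \<Rightarrow> nat \<Rightarrow> 'x \<times> 'y) measure" where
  "source_sample_dist DT D n T = PiM {..<T} (\<lambda>_. source_seq_dist DT D n)"

definition icl_erm_obj ::
  "('y \<Rightarrow> 'p \<Rightarrow> real) \<Rightarrow> nat \<Rightarrow> nat \<Rightarrow> ('x, 'y, 'p) icl_alg \<Rightarrow> (nat \<Rightarrow> nat \<Rightarrow> 'x \<times> 'y) \<Rightarrow> real" where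
  "icl_erm_obj l n T alg \<omega> = (1 / real T) * (\<Sum>t<T. emp_loss l n alg (\<omega> t))"

definition task_risk ::
  "('y \<Rightarrow> 'p \<Rightarrow> real) \<Rightarrow> nat \<Rightarrow> ('task \<Rightarrow> ('x \<times> 'y) measure) \<Rightarrow> ('x, 'y, 'p) icl_alg \<Rightarrow> 'task \<Rightarrow> real" where
  "task_risk l n D alg \<tau> = (\<integral>s. emp_loss l n alg s \<partial>task_seq_dist D n \<tau>)"

definition expected_task_risk ::
  "('y \<Rightarrow> 'p \<Rightarrow> real) \<Rightarrow> nat \<Rightarrow> 'task measure \<Rightarrow> ('task \<Rightarrow> ('x \<times> 'y) measure) \<Rightarrow> ('x, 'y, 'p) icl_alg \<Rightarrow> real" where
  "expected_task_risk l n DT D alg = (\<integral>\<tau>. task_risk l n D alg \<tau> \<partial>DT)"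

definition alg_dist ::
  "('x \<times> 'y) set \<Rightarrow> nat \<Rightarrow> ('x, 'y, 'p::real_normed_vector) icl_alg \<Rightarrow> ('x, 'y, 'p) icl_alg \<Rightarrow> ereal" where
  "alg_dist X n a a' =
     (SUP s \<in> {s. \<forall>i<n. s i \<in> X}.
        ereal ((1 / real n) * (\<Sum>i<n. norm (a (map s [0..<i]) (fst (s i)) - a' (map s [0..<i]) (fst (s i))))))"

definition covering_number :: "'a set \<Rightarrow> ('a \<Rightarrow> 'a \<Rightarrow> ereal) \<Rightarrow> real \<Rightarrow> enat" where
  "covering_number A d \<epsilon> =
     (if \<exists>C. finite C \<and> C \<subseteq> A \<and> (\<forall>a\<in>A. \<exists>c\<in>C. d a c \<le> ereal \<epsilon>)
      then enat (LEAST k. \<exists>C. finite C \<and> C \<subseteq> A \<and> card C = k \<and> (\<forall>a\<in>A. \<exists>c\<in>C. d a c \<le> ereal \<epsilon>))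
      else \<infinity>)"

end

theory Submission
  imports Defs
begin

text \<open>
  Fix a scale \<open>\<epsilon>\<close> and a minimal \<open>\<epsilon>\<close>-cover \<open>C\<close> of \<open>A\<close>, of size \<open>N\<close>. Because the loss is
  \<open>L\<close>-Lipschitz, replacing an algorithm by its cover centre changes both the ICL-ERM objective and
  the expected task risk by at most \<open>L \<epsilon>\<close>; hence the excess risk of the empirical minimiser is
  at most \<open>4 L \<epsilon>\<close> plus twice the largest gap between objective and risk on \<open>C\<close>. The source
  tasks are i.i.d., so Hoeffding's inequality and a union bound over \<open>C\<close> bound this gap by
  \<open>B sqrt (ln (N / \<delta>) / (2 T))\<close> with probability at least \<open>1 - 2 \<delta>\<close>.

  A single event has to serve all scales at once: choosing scales whose bounds converge to the
  infimum, the limit superior of the corresponding events still has probability at least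
  \<open>1 - 2 \<delta>\<close>, and every sample in it satisfies the bound at infinitely many of these scales.
\<close>

section \<open>Task distributions\<close>

lemma measurable_task_seq_dist:
  assumes kernel: "D \<in> measurable DT (prob_algebra Z)"
  shows "task_seq_dist D n \<in> DT \<rightarrow>\<^sub>M prob_algebra (PiM {..<n} (\<lambda>_. Z))"
proof (rule measurable_prob_algebra_generated[OF sets_PiM Int_stable_prod_algebra prod_algebra_sets_into_space])
  fix \<tau> assume \<tau>: "\<tau> \<in> space DT"
  then have prob: "prob_space (D \<tau>)" and sets: "sets (D \<tau>) = sets Z"
    using measurable_space[OF kernel \<tau>] by (auto simp: space_prob_algebra)
  show "prob_space (task_seq_dist D n \<tau>)"
    unfolding task_seq_dist_def by (rule prob_space_PiM) (use prob in auto)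
  show "sets (task_seq_dist D n \<tau>) = sets (PiM {..<n} (\<lambda>_. Z))"
    unfolding task_seq_dist_def by (rule sets_PiM_cong) (use sets in auto)
next
  fix X assume "X \<in> prod_algebra {..<n} (\<lambda>_. Z)"
  then obtain J F where J: "finite J" "J \<subseteq> {..<n}" and F: "\<And>j. j \<in> J \<Longrightarrow> F j \<in> sets Z"
    and X: "X = prod_emb {..<n} (\<lambda>_. Z) J (Pi\<^sub>E J F)"
    by (auto simp: prod_algebra_def Pi_iff)
  have "emeasure (task_seq_dist D n \<tau>) X = (\<Prod>j\<in>J. emeasure (D \<tau>) (F j))" if \<tau>: "\<tau> \<in> space DT" for \<tau>
  proof -
    have prob: "prob_space (D \<tau>)" and sets: "sets (D \<tau>) = sets Z"
      using measurable_space[OF kernel \<tau>] by (auto simp: space_prob_algebra)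
    have "X = prod_emb {..<n} (\<lambda>_. D \<tau>) J (Pi\<^sub>E J F)"
      unfolding X prod_emb_def by (simp add: sets_eq_imp_space_eq[OF sets])
    then show ?thesis
      unfolding task_seq_dist_def using emeasure_PiM_emb[of "{..<n}" "\<lambda>_. D \<tau>" J F] prob J F sets by auto
  qed
  moreover have "(\<lambda>\<tau>. \<Prod>j\<in>J. emeasure (D \<tau>) (F j)) \<in> borel_measurable DT"
    using F measurable_emeasure_kernel[OF measurable_prob_algebraD[OF kernel]]
    by (intro borel_measurable_prod_ennreal) auto
  ultimately show "(\<lambda>\<tau>. emeasure (task_seq_dist D n \<tau>) X) \<in> borel_measurable DT"
    by (simp cong: measurable_cong)
qed

lemma
  assumes "prob_space DT" and kernel: "D \<in> measurable DT (prob_algebra Z)"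
  shows prob_space_source_seq_dist: "prob_space (source_seq_dist DT D n)"
    and sets_source_seq_dist: "sets (source_seq_dist DT D n) = sets (PiM {..<n} (\<lambda>_. Z))"
proof -
  have "DT \<in> space (prob_algebra DT)" using assms(1) by (simp add: space_prob_algebra)
  then show "prob_space (source_seq_dist DT D n)" "sets (source_seq_dist DT D n) = sets (PiM {..<n} (\<lambda>_. Z))"
    unfolding source_seq_dist_def
    using prob_space_bind' sets_bind' measurable_task_seq_dist[OF kernel] by blast+
qed

lemma integral_source_seq_dist:
  fixes f :: "_ \<Rightarrow> real"
  assumes DT: "prob_space DT" and kernel: "D \<in> measurable DT (prob_algebra Z)"
    and f: "f \<in> borel_measurable (PiM {..<n} (\<lambda>_. Z))" and bounded: "\<And>s. \<bar>f s\<bar> \<le> B"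
  shows "integral\<^sup>L (source_seq_dist DT D n) f = (\<integral>\<tau>. integral\<^sup>L (task_seq_dist D n \<tau>) f \<partial>DT)"
proof -
  note K = measurable_prob_algebraD[OF measurable_task_seq_dist[OF kernel]]
  interpret prob_space DT by (rule DT)
  show ?thesis unfolding source_seq_dist_def
  proof (rule integral_bind[OF f bounded K])
    show "finite_measure DT" by unfold_locales
    show "AE \<tau> in DT. emeasure (task_seq_dist D n \<tau>) (space (task_seq_dist D n \<tau>)) \<le> ennreal 1"
      using measurable_space[OF K]
      by (auto intro!: AE_I2 subprob_space.subprob_emeasure_le_1 simp: space_subprob_algebra)
  qed
qed

lemma expected_task_risk_eq_integral_source:
  assumes "prob_space DT" and "D \<in> measurable DT (prob_algebra Z)"
    and "emp_loss l n a \<in> borel_measurable (PiM {..<n} (\<lambda>_. Z))" and "\<And>s. \<bar>emp_loss l n a s\<bar> \<le> B"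
  shows "expected_task_risk l n DT D a = integral\<^sup>L (source_seq_dist DT D n) (emp_loss l n a)"
  unfolding expected_task_risk_def task_risk_def
  by (rule integral_source_seq_dist[symmetric]) (use assms in auto)


section \<open>Concentration on i.i.d. products\<close>

lemma indep_vars_PiM_components:
  assumes prob: "\<And>i. i \<in> I \<Longrightarrow> prob_space (M i)" and "I \<noteq> {}"
  shows "prob_space.indep_vars (PiM I M) M (\<lambda>i \<omega>. \<omega> i) I"
proof -
  interpret P: prob_space "PiM I M" by (rule prob_space_PiM) (use prob in auto)
  have "distr (PiM I M) (PiM I M) (\<lambda>\<omega>. \<lambda>i\<in>I. \<omega> i) = distr (PiM I M) (PiM I M) (\<lambda>\<omega>. \<omega>)"
    by (rule distr_cong) (auto simp: space_PiM PiE_def extensional_restrict)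
  also have "\<dots> = PiM I (\<lambda>i. distr (PiM I M) (M i) (\<lambda>\<omega>. \<omega> i))"
    using distr_PiM_component[of I M] prob by (auto intro: PiM_cong)
  finally show ?thesis
    using \<open>I \<noteq> {}\<close> by (subst P.indep_vars_iff_distr_eq_PiM') auto
qed

lemma distr_PiM_component_compose:
  assumes "\<And>i. i \<in> I \<Longrightarrow> prob_space (M i)" and "i \<in> I" and "g \<in> M i \<rightarrow>\<^sub>M N"
  shows "distr (PiM I M) N (\<lambda>\<omega>. g (\<omega> i)) = distr (M i) N g"
  using distr_distr[of g "M i" N "\<lambda>\<omega>. \<omega> i" "PiM I M"] distr_PiM_component[of I M i] assms
  by (simp add: comp_def)

lemma integral_PiM_component:
  fixes g :: "_ \<Rightarrow> real"
  assumes "\<And>i. i \<in> I \<Longrightarrow> prob_space (M i)" and "i \<in> I" and "g \<in> borel_measurable (M i)"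
  shows "(\<integral>\<omega>. g (\<omega> i) \<partial>PiM I M) = integral\<^sup>L (M i) g"
  using integral_distr[of "\<lambda>\<omega>. \<omega> i" "PiM I M" "M i" g] distr_PiM_component[of I M i] assms
  by simp

lemma prob_PiM_mean_deviation_ge:
  fixes g :: "'a \<Rightarrow> real" and T :: nat
  assumes S: "prob_space S" and T: "T > 0" and g: "g \<in> borel_measurable S"
    and g_range: "\<And>x. x \<in> space S \<Longrightarrow> g x \<in> {a..b}" and "a < b" and "r \<ge> 0"
  shows "measure (PiM {..<T} (\<lambda>_. S))
           {\<omega> \<in> space (PiM {..<T} (\<lambda>_. S)). \<bar>(\<Sum>t<T. g (\<omega> t)) / real T - integral\<^sup>L S g\<bar> \<ge> r}
         \<le> 2 * exp (- 2 * real T * r\<^sup>2 / (b - a)\<^sup>2)"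
proof -
  let ?M = "PiM {..<T} (\<lambda>_. S)"
  have "{..<T} \<noteq> {}" and "0 \<in> {..<T}" using T by auto
  have "Hoeffding_ineq_iid ?M {..<T} (\<lambda>t \<omega>. g (\<omega> t)) (\<lambda>\<omega>. g (\<omega> 0)) a b"
    unfolding Hoeffding_ineq_iid_def
  proof (intro iid_interval_bounded_random_variables.intro iid_interval_bounded_random_variables_axioms.intro conjI)
    show M: "prob_space ?M" by (rule prob_space_PiM) (use S in auto)
    show "prob_space.indep_vars ?M (\<lambda>_. borel) (\<lambda>t \<omega>. g (\<omega> t)) {..<T}"
      using prob_space.indep_vars_compose2[OF M indep_vars_PiM_components[OF S \<open>{..<T} \<noteq> {}\<close>]] g
      by auto
    show "distr ?M borel (\<lambda>\<omega>. g (\<omega> t)) = distr ?M borel (\<lambda>\<omega>. g (\<omega> 0))" if "t \<in> {..<T}" for t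
      using distr_PiM_component_compose[OF S that g] distr_PiM_component_compose[OF S \<open>0 \<in> {..<T}\<close> g]
      by simp
    show "AE \<omega> in ?M. g (\<omega> 0) \<in> {a..b}"
      using g_range \<open>0 \<in> {..<T}\<close> by (intro AE_I2) (auto simp: space_PiM)
  qed (use g \<open>0 \<in> {..<T}\<close> in simp_all)
  from Hoeffding_ineq_iid.Hoeffding_ineq_abs_ge'[OF this \<open>r \<ge> 0\<close> \<open>a < b\<close> \<open>{..<T} \<noteq> {}\<close>]
  show ?thesis
    using integral_PiM_component[OF S \<open>0 \<in> {..<T}\<close> g] by simp
qed

lemma PiM_uniform_mean_deviation_le:
  fixes g :: "'c \<Rightarrow> 'a \<Rightarrow> real" and T :: nat
  assumes S: "prob_space S" and T: "T > 0" and C: "finite C" "C \<noteq> {}"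
    and g: "\<And>c. c \<in> C \<Longrightarrow> g c \<in> borel_measurable S"
    and g_range: "\<And>c x. c \<in> C \<Longrightarrow> x \<in> space S \<Longrightarrow> g c x \<in> {0..B}"
    and \<delta>: "0 < \<delta>" "\<delta> \<le> 1"
  shows "\<exists>G\<in>sets (PiM {..<T} (\<lambda>_. S)). 1 - 2 * \<delta> \<le> measure (PiM {..<T} (\<lambda>_. S)) G \<and>
           (\<forall>\<omega>\<in>G. \<forall>c\<in>C. \<bar>(\<Sum>t<T. g c (\<omega> t)) / real T - integral\<^sup>L S (g c)\<bar>
                         \<le> B * sqrt (ln (card C / \<delta>) / (2 * real T)))"
    (is "\<exists>G\<in>sets ?M. _ \<and> (\<forall>\<omega>\<in>G. \<forall>c\<in>C. \<bar>?dev c \<omega>\<bar> \<le> ?r)")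
proof -
  interpret P: prob_space ?M by (rule prob_space_PiM) (use S in auto)
  have "\<delta> \<le> card C"
    using C \<delta> by (metis card_gt_0_iff of_nat_1 of_nat_le_iff order.trans less_one not_le)
  then have "ln (card C / \<delta>) \<ge> 0"
    using \<delta> by simp
  then have r_nonneg: "0 \<le> ?r" if "0 \<le> B" using that by simp
  obtain c0 x0 where "c0 \<in> C" "x0 \<in> space S"
    using C prob_space.not_empty[OF S] by blast
  then have "0 \<le> B" using g_range by force
  \<comment> \<open>Hoeffding's inequality needs a nondegenerate range, so constant losses are treated apart.\<close>
  then consider "B = 0" | "B > 0" by linarith
  then show ?thesis
  proof cases
    case 1
    have "?dev c \<omega> = 0" if "\<omega> \<in> space ?M" "c \<in> C" for c \<omega>
    proof -
      have "g c x = 0" if "x \<in> space S" for x using g_range[OF \<open>c \<in> C\<close> that] 1 by simp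
      moreover have "\<omega> t \<in> space S" if "t < T" for t using \<open>\<omega> \<in> space ?M\<close> that by (auto simp: space_PiM)
      ultimately show ?thesis by (simp cong: Bochner_Integration.integral_cong)
    qed
    then show ?thesis using r_nonneg \<open>0 \<le> B\<close> \<delta> by (intro bexI[of _ "space ?M"]) (auto simp: P.prob_space)
  next
    case 2
    define bad where "bad c = {\<omega> \<in> space ?M. \<bar>?dev c \<omega>\<bar> \<ge> ?r}" for c
    have bad_sets: "bad c \<in> sets ?M" if "c \<in> C" for c
      unfolding bad_def using g[OF that] by measurable
    have "measure ?M (bad c) \<le> 2 * (\<delta> / card C)" if "c \<in> C" for c
    proof -
      have "measure ?M (bad c) \<le> 2 * exp (- 2 * real T * ?r\<^sup>2 / (B - 0)\<^sup>2)"
        unfolding bad_def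
        by (rule prob_PiM_mean_deviation_ge[OF S T g[OF that] g_range[OF that] 2 r_nonneg[OF \<open>0 \<le> B\<close>]]) simp
      also have "- 2 * real T * ?r\<^sup>2 / (B - 0)\<^sup>2 = - ln (card C / \<delta>)"
        using 2 T \<open>ln (card C / \<delta>) \<ge> 0\<close> by (simp add: power_mult_distrib field_simps)
      also have "exp (- ln (card C / \<delta>)) = \<delta> / card C"
        using C \<delta> by (simp add: exp_minus card_gt_0_iff)
      finally show ?thesis .
    qed
    then have "measure ?M (\<Union>c\<in>C. bad c) \<le> 2 * \<delta>"
      using P.finite_measure_subadditive_finite[OF C(1), of bad] bad_sets
        sum_mono[of C "\<lambda>c. measure ?M (bad c)" "\<lambda>_. 2 * (\<delta> / card C)"] C
      by (simp add: image_subset_iff)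
    moreover have "measure ?M (space ?M - (\<Union>c\<in>C. bad c)) = 1 - measure ?M (\<Union>c\<in>C. bad c)"
      using C bad_sets by (intro P.prob_compl) auto
    moreover have "space ?M - (\<Union>c\<in>C. bad c) \<in> sets ?M"
      using C bad_sets by auto
    moreover have "\<bar>?dev c \<omega>\<bar> \<le> ?r" if "\<omega> \<in> space ?M - (\<Union>c\<in>C. bad c)" "c \<in> C" for \<omega> c
    proof -
      from that have "\<omega> \<in> space ?M" "\<omega> \<notin> bad c" by auto
      then show ?thesis by (simp add: bad_def)
    qed
    ultimately show ?thesis
      by (intro bexI[of _ "space ?M - (\<Union>c\<in>C. bad c)"]) auto
  qed
qed

lemma (in prob_space) event_le_INF_of_events_le:
  fixes X :: "'a \<Rightarrow> real" and f :: "'i \<Rightarrow> real"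
  assumes "p \<le> 1" and events: "\<And>i. i \<in> I \<Longrightarrow> \<exists>G\<in>events. p \<le> prob G \<and> (\<forall>\<omega>\<in>G. X \<omega> \<le> f i)"
  shows "\<exists>E\<in>events. p \<le> prob E \<and> (\<forall>\<omega>\<in>E. ereal (X \<omega>) \<le> (INF i\<in>I. ereal (f i)))"
proof (cases "I = {}")
  case True
  then show ?thesis using \<open>p \<le> 1\<close> by (intro bexI[of _ "space M"]) (auto simp: prob_space)
next
  case False
  then obtain u where u: "\<And>j. u j \<in> (\<lambda>i. ereal (f i)) ` I" "u \<longlonglongrightarrow> (INF i\<in>I. ereal (f i))"
    using Inf_as_limit[of "(\<lambda>i. ereal (f i)) ` I"] by auto
  have "\<exists>G\<in>events. p \<le> prob G \<and> (\<forall>\<omega>\<in>G. ereal (X \<omega>) \<le> u j)" for j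
  proof -
    obtain i where "i \<in> I" "u j = ereal (f i)" using u(1) by blast
    with events[of i] show ?thesis by auto
  qed
  then obtain G where G: "\<And>j. G j \<in> events" "\<And>j. p \<le> prob (G j)"
    "\<And>j \<omega>. \<omega> \<in> G j \<Longrightarrow> ereal (X \<omega>) \<le> u j"
    by metis
  define U where "U m = (\<Union>j\<in>{m..}. G j)" for m
  have U_sets: "U m \<in> events" for m unfolding U_def using G(1) by auto
  have "p \<le> prob (U m)" for m
    using G(2)[of m] finite_measure_mono[of "G m" "U m"] U_sets by (force simp: U_def)
  moreover have "decseq U"
    unfolding decseq_def U_def by (meson UN_mono atLeast_subset_iff order.refl)
  then have "(\<lambda>m. prob (U m)) \<longlonglongrightarrow> prob (\<Inter>m. U m)"
    using U_sets by (intro finite_Lim_measure_decseq) auto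
  ultimately have "p \<le> prob (\<Inter>m. U m)"
    by (intro LIMSEQ_le_const) auto
  moreover have "ereal (X \<omega>) \<le> (INF i\<in>I. ereal (f i))" if \<omega>: "\<omega> \<in> (\<Inter>m. U m)" for \<omega>
  proof (rule ccontr)
    assume "\<not> ?thesis"
    then obtain m where "\<And>j. j \<ge> m \<Longrightarrow> u j < ereal (X \<omega>)"
      using order_tendstoD(2)[OF u(2)] by (auto simp: not_le eventually_sequentially)
    moreover obtain j where "j \<ge> m" "\<omega> \<in> G j" using \<omega> by (auto simp: U_def)
    ultimately show False using G(3) by (meson leD)
  qed
  ultimately show ?thesis using U_sets by blast
qed


lemma emp_loss_nonneg:
  assumes "\<And>y p. 0 \<le> l y p"
  shows "0 \<le> emp_loss l n a s"
  using assms by (simp add: emp_loss_def sum_nonneg)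

lemma emp_loss_le:
  assumes "\<And>y p. l y p \<le> B" and "0 \<le> B"
  shows "emp_loss l n a s \<le> B"
proof (cases "n = 0")
  case False
  have "(\<Sum>i<n. l (snd (s i)) (a (map s [0..<i]) (fst (s i)))) \<le> real n * B"
    using sum_mono[of "{..<n}" _ "\<lambda>_. B"] assms(1) by simp
  then show ?thesis using False by (simp add: emp_loss_def field_simps)
qed (simp add: emp_loss_def \<open>0 \<le> B\<close>)

lemma emp_loss_diff_le_alg_dist:
  fixes l :: "'y \<Rightarrow> 'p::real_normed_vector \<Rightarrow> real"
  assumes lipschitz: "\<And>y p q. \<bar>l y p - l y q\<bar> \<le> L * norm (p - q)" and "0 \<le> L"
    and dist: "alg_dist X n a c \<le> ereal \<epsilon>" and s: "\<And>i. i < n \<Longrightarrow> s i \<in> X"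
  shows "\<bar>emp_loss l n a s - emp_loss l n c s\<bar> \<le> L * \<epsilon>"
proof -
  let ?x = "\<lambda>i. fst (s i)" and ?y = "\<lambda>i. snd (s i)" and ?S = "\<lambda>i. map s [0..<i]"
  let ?N = "(1 / real n) * (\<Sum>i<n. norm (a (?S i) (?x i) - c (?S i) (?x i)))"
  have "ereal ?N \<le> alg_dist X n a c"
    unfolding alg_dist_def by (rule SUP_upper2[of s]) (use s in auto)
  from order.trans[OF this dist] have N: "?N \<le> \<epsilon>" by (simp only: ereal_less_eq)
  have "\<bar>emp_loss l n a s - emp_loss l n c s\<bar>
      = (1 / real n) * \<bar>\<Sum>i<n. l (?y i) (a (?S i) (?x i)) - l (?y i) (c (?S i) (?x i))\<bar>"
    unfolding emp_loss_def sum_subtractf right_diff_distrib[symmetric] abs_mult by simp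
  also have "\<dots> \<le> (1 / real n) * (\<Sum>i<n. \<bar>l (?y i) (a (?S i) (?x i)) - l (?y i) (c (?S i) (?x i))\<bar>)"
    by (intro mult_left_mono sum_abs) auto
  also have "\<dots> \<le> (1 / real n) * (\<Sum>i<n. L * norm (a (?S i) (?x i) - c (?S i) (?x i)))"
    by (intro mult_left_mono sum_mono lipschitz) auto
  also have "\<dots> = L * ?N" by (simp add: sum_distrib_left)
  also have "\<dots> \<le> L * \<epsilon>" using N \<open>0 \<le> L\<close> by (rule mult_left_mono)
  finally show ?thesis .
qed

lemma icl_erm_obj_diff_le:
  assumes "T > 0" and "\<And>t. t < T \<Longrightarrow> \<bar>emp_loss l n a (\<omega> t) - emp_loss l n c (\<omega> t)\<bar> \<le> \<eta>"
  shows "\<bar>icl_erm_obj l n T a \<omega> - icl_erm_obj l n T c \<omega>\<bar> \<le> \<eta>"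
proof -
  have "\<bar>(\<Sum>t<T. emp_loss l n a (\<omega> t)) - (\<Sum>t<T. emp_loss l n c (\<omega> t))\<bar>
      \<le> (\<Sum>t<T. \<bar>emp_loss l n a (\<omega> t) - emp_loss l n c (\<omega> t)\<bar>)"
    unfolding sum_subtractf[symmetric] by (rule sum_abs)
  also have "\<dots> \<le> real T * \<eta>"
    using sum_mono[of "{..<T}" _ "\<lambda>_. \<eta>"] assms(2) by simp
  finally show ?thesis
    using \<open>T > 0\<close> by (simp add: icl_erm_obj_def right_diff_distrib[symmetric] abs_mult field_simps)
qed


section \<open>Excess risk through a finite net\<close>

lemma excess_risk_le_of_net:
  fixes F R :: "'a \<Rightarrow> real"
  assumes min: "a\<^sub>0 \<in> A" "\<And>a. a \<in> A \<Longrightarrow> F a\<^sub>0 \<le> F a"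
    and net: "\<And>a. a \<in> A \<Longrightarrow> \<exists>c\<in>C. \<bar>F a - F c\<bar> \<le> \<eta> \<and> \<bar>R a - R c\<bar> \<le> \<eta>"
    and deviation: "\<And>c. c \<in> C \<Longrightarrow> \<bar>F c - R c\<bar> \<le> r"
  shows "R a\<^sub>0 - (INF a\<in>A. R a) \<le> 4 * \<eta> + 2 * r"
proof -
  have dev_A: "\<bar>F a - R a\<bar> \<le> 2 * \<eta> + r" if "a \<in> A" for a
    using net[OF that] deviation by force
  have "R a\<^sub>0 - (4 * \<eta> + 2 * r) \<le> R a" if "a \<in> A" for a
    using dev_A[OF min(1)] dev_A[OF that] min(2)[OF that] by linarith
  then have "R a\<^sub>0 - (4 * \<eta> + 2 * r) \<le> (INF a\<in>A. R a)"
    using min(1) by (intro cINF_greatest) auto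
  then show ?thesis by simp
qed

lemma covering_number_obtain_cover:
  assumes "covering_number A d \<epsilon> \<noteq> \<infinity>"
  obtains C where "finite C" "C \<subseteq> A" "card C = the_enat (covering_number A d \<epsilon>)"
    and "\<And>a. a \<in> A \<Longrightarrow> \<exists>c\<in>C. d a c \<le> ereal \<epsilon>"
proof -
  let ?cover = "\<lambda>k C. finite C \<and> C \<subseteq> A \<and> card C = k \<and> (\<forall>a\<in>A. \<exists>c\<in>C. d a c \<le> ereal \<epsilon>)"
  have ex: "\<exists>k C. ?cover k C"
    using assms unfolding covering_number_def by (auto split: if_splits)
  then have "covering_number A d \<epsilon> = enat (LEAST k. \<exists>C. ?cover k C)"
    unfolding covering_number_def by auto
  moreover have "\<exists>C. ?cover (LEAST k. \<exists>C. ?cover k C) C"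
    using ex by (rule LeastI2_ex) auto
  ultimately show ?thesis using that by auto
qed

locale icl_erm_transfer =
  fixes l :: "'y \<Rightarrow> 'p::euclidean_space \<Rightarrow> real"
    and A :: "('x, 'y, 'p) icl_alg set"
    and Z :: "('x \<times> 'y) measure"
    and DT :: "'task measure"
    and D :: "'task \<Rightarrow> ('x \<times> 'y) measure"
    and n T :: nat and L B :: real
    and erm :: "(nat \<Rightarrow> nat \<Rightarrow> 'x \<times> 'y) \<Rightarrow> ('x, 'y, 'p) icl_alg"
  assumes task_dist: "prob_space DT"
    and task_kernel: "D \<in> measurable DT (prob_algebra Z)"
    and lipschitz: "\<forall>y p q. \<bar>l y p - l y q\<bar> \<le> L * norm (p - q)"
    and bounded: "\<forall>y p. 0 \<le> l y p \<and> l y p \<le> B"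
    and alg_meas: "\<forall>a\<in>A. (\<lambda>s. emp_loss l n a s) \<in> borel_measurable (PiM {..<n} (\<lambda>_. Z))"
    and T_pos: "T > 0"
    and erm: "\<forall>\<omega>\<in>space (source_sample_dist DT D n T).
               erm \<omega> \<in> A \<and> (\<forall>a\<in>A. icl_erm_obj l n T (erm \<omega>) \<omega> \<le> icl_erm_obj l n T a \<omega>)"
begin

abbreviation "source \<equiv> source_seq_dist DT D n"
abbreviation "sample \<equiv> source_sample_dist DT D n T"
abbreviation "risk \<equiv> expected_task_risk l n DT D"

lemma L_nonneg: "0 \<le> L"
proof -
  obtain b :: 'p where "b \<in> Basis" using nonempty_Basis by blast
  then have "\<bar>l y b - l y 0\<bar> \<le> L" for y using lipschitz by (metis diff_zero mult.right_neutral norm_Basis)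
  then show ?thesis by (meson abs_ge_zero order.trans)
qed

lemma B_nonneg: "0 \<le> B"
  using bounded by (meson order.trans)

lemma emp_loss_range: "emp_loss l n a s \<in> {0..B}"
  using emp_loss_nonneg[of l] emp_loss_le[of l B] bounded B_nonneg by auto

lemma emp_loss_abs_le: "\<bar>emp_loss l n a s\<bar> \<le> B"
  using emp_loss_range[of a s] by simp

lemma prob_space_source: "prob_space source"
  using prob_space_source_seq_dist[OF task_dist task_kernel] .

lemma space_source: "space source = PiE {..<n} (\<lambda>_. space Z)"
  using sets_eq_imp_space_eq[OF sets_source_seq_dist[OF task_dist task_kernel]] by (simp add: space_PiM)

lemma sample_eq_PiM: "sample = PiM {..<T} (\<lambda>_. source)"
  by (simp add: source_sample_dist_def)

lemma prob_space_sample: "prob_space sample"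
  unfolding sample_eq_PiM by (rule prob_space_PiM) (use prob_space_source in auto)

lemma A_nonempty: "A \<noteq> {}"
  using erm prob_space.not_empty[OF prob_space_sample] by blast

lemma emp_loss_measurable_source: "a \<in> A \<Longrightarrow> emp_loss l n a \<in> borel_measurable source"
  using alg_meas measurable_cong_sets[OF sets_source_seq_dist[OF task_dist task_kernel] refl] by auto

lemma risk_eq_integral: "a \<in> A \<Longrightarrow> risk a = integral\<^sup>L source (emp_loss l n a)"
  using emp_loss_abs_le alg_meas
  by (intro expected_task_risk_eq_integral_source[OF task_dist task_kernel, of _ _ _ B]) auto

lemma risk_diff_le:
  assumes "a \<in> A" "c \<in> A" and dist: "alg_dist (space Z) n a c \<le> ereal \<epsilon>"
  shows "\<bar>risk a - risk c\<bar> \<le> L * \<epsilon>"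
proof -
  interpret S: prob_space source by (rule prob_space_source)
  have integrable: "integrable source (emp_loss l n a')" if "a' \<in> A" for a'
    using emp_loss_abs_le emp_loss_measurable_source[OF that]
    by (intro S.integrable_const_bound[where B = B]) auto
  have "\<bar>emp_loss l n a s - emp_loss l n c s\<bar> \<le> L * \<epsilon>" if "s \<in> space source" for s
    using lipschitz L_nonneg dist that
    by (intro emp_loss_diff_le_alg_dist[where X = "space Z"]) (auto simp: space_source)
  then have "\<bar>integral\<^sup>L source (\<lambda>s. emp_loss l n a s - emp_loss l n c s)\<bar> \<le> integral\<^sup>L source (\<lambda>_. L * \<epsilon>)"
    using integrable assms by (intro order.trans[OF integral_abs_bound] integral_mono) auto
  then show ?thesis using risk_eq_integral assms integrable by (simp add: S.prob_space)
qed

lemma sample_component_space: "\<omega> \<in> space sample \<Longrightarrow> t < T \<Longrightarrow> i < n \<Longrightarrow> \<omega> t i \<in> space Z"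
  by (auto simp: sample_eq_PiM space_PiM space_source)

lemma icl_erm_obj_diff_le_alg_dist:
  assumes "\<omega> \<in> space sample" and "alg_dist (space Z) n a c \<le> ereal \<epsilon>"
  shows "\<bar>icl_erm_obj l n T a \<omega> - icl_erm_obj l n T c \<omega>\<bar> \<le> L * \<epsilon>"
  using lipschitz L_nonneg assms sample_component_space
  by (intro icl_erm_obj_diff_le T_pos emp_loss_diff_le_alg_dist[where X = "space Z"]) auto

lemma risk_deviation_event:
  assumes C: "finite C" "C \<subseteq> A" "C \<noteq> {}" and \<delta>: "0 < \<delta>" "\<delta> \<le> 1"
  shows "\<exists>G\<in>sets sample. 1 - 2 * \<delta> \<le> measure sample G \<and>
           (\<forall>\<omega>\<in>G. \<forall>c\<in>C. \<bar>icl_erm_obj l n T c \<omega> - risk c\<bar> \<le> B * sqrt (ln (card C / \<delta>) / (2 * real T)))"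
proof -
  have "\<exists>G\<in>sets sample. 1 - 2 * \<delta> \<le> measure sample G \<and>
      (\<forall>\<omega>\<in>G. \<forall>c\<in>C. \<bar>(\<Sum>t<T. emp_loss l n c (\<omega> t)) / real T - integral\<^sup>L source (emp_loss l n c)\<bar>
                    \<le> B * sqrt (ln (card C / \<delta>) / (2 * real T)))"
    unfolding sample_eq_PiM using \<delta> emp_loss_range C(2)
    by (intro PiM_uniform_mean_deviation_le prob_space_source T_pos C(1,3) emp_loss_measurable_source) auto
  moreover have "icl_erm_obj l n T c \<omega> - risk c
      = (\<Sum>t<T. emp_loss l n c (\<omega> t)) / real T - integral\<^sup>L source (emp_loss l n c)" if "c \<in> C" for c \<omega>
    using risk_eq_integral that C(2) by (auto simp: icl_erm_obj_def)
  ultimately show ?thesis by simp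
qed

lemma excess_risk_le_of_risk_deviation:
  assumes \<omega>: "\<omega> \<in> space sample" and "C \<subseteq> A"
    and cover: "\<And>a. a \<in> A \<Longrightarrow> \<exists>c\<in>C. alg_dist (space Z) n a c \<le> ereal \<epsilon>"
    and deviation: "\<And>c. c \<in> C \<Longrightarrow> \<bar>icl_erm_obj l n T c \<omega> - risk c\<bar> \<le> r"
  shows "risk (erm \<omega>) - (INF a\<in>A. risk a) \<le> 4 * L * \<epsilon> + 2 * r"
proof -
  have "risk (erm \<omega>) - (INF a\<in>A. risk a) \<le> 4 * (L * \<epsilon>) + 2 * r"
  proof (rule excess_risk_le_of_net[where F = "\<lambda>a. icl_erm_obj l n T a \<omega>" and C = C])
    show "erm \<omega> \<in> A" "\<And>a. a \<in> A \<Longrightarrow> icl_erm_obj l n T (erm \<omega>) \<omega> \<le> icl_erm_obj l n T a \<omega>"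
      using erm \<omega> by auto
    show "\<exists>c\<in>C. \<bar>icl_erm_obj l n T a \<omega> - icl_erm_obj l n T c \<omega>\<bar> \<le> L * \<epsilon> \<and> \<bar>risk a - risk c\<bar> \<le> L * \<epsilon>"
      if "a \<in> A" for a
      using cover[OF that] icl_erm_obj_diff_le_alg_dist[OF \<omega>] risk_diff_le[OF that] \<open>C \<subseteq> A\<close> by blast
  qed (rule deviation)
  then show ?thesis by (simp add: mult.assoc)
qed

lemma excess_risk_bound_at_scale:
  assumes \<delta>: "0 < \<delta>" "\<delta> < 1"
    and finite_cover: "covering_number A (alg_dist (space Z) n) \<epsilon> \<noteq> \<infinity>"
  defines "k \<equiv> the_enat (covering_number A (alg_dist (space Z) n) \<epsilon>)"
  shows "\<exists>G\<in>sets sample. 1 - 2 * \<delta> \<le> measure sample G \<and>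
           (\<forall>\<omega>\<in>G. risk (erm \<omega>) - (INF a\<in>A. risk a)
                   \<le> 4 * L * \<epsilon> + B * sqrt (2 * ln (real k / \<delta>) / real T))"
proof -
  obtain C where C: "finite C" "C \<subseteq> A" "card C = k"
    and cover: "\<And>a. a \<in> A \<Longrightarrow> \<exists>c\<in>C. alg_dist (space Z) n a c \<le> ereal \<epsilon>"
    using covering_number_obtain_cover[OF finite_cover] unfolding k_def by blast
  have "C \<noteq> {}" using cover A_nonempty by blast
  define r where "r = B * sqrt (ln (real k / \<delta>) / (2 * real T))"
  obtain G where G: "G \<in> sets sample" "1 - 2 * \<delta> \<le> measure sample G"
    and deviation: "\<And>\<omega> c. \<omega> \<in> G \<Longrightarrow> c \<in> C \<Longrightarrow> \<bar>icl_erm_obj l n T c \<omega> - risk c\<bar> \<le> r"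
    using risk_deviation_event[OF C(1,2) \<open>C \<noteq> {}\<close>, of \<delta>] \<delta> unfolding r_def C(3) by auto
  have "2 * ln (real k / \<delta>) / real T = 2\<^sup>2 * (ln (real k / \<delta>) / (2 * real T))"
    by (simp add: power2_eq_square)
  then have "sqrt (2 * ln (real k / \<delta>) / real T) = 2 * sqrt (ln (real k / \<delta>) / (2 * real T))"
    by (simp only: real_sqrt_mult real_sqrt_abs abs_numeral)
  then have "B * sqrt (2 * ln (real k / \<delta>) / real T) = 2 * r"
    unfolding r_def by simp
  moreover have "risk (erm \<omega>) - (INF a\<in>A. risk a) \<le> 4 * L * \<epsilon> + 2 * r" if "\<omega> \<in> G" for \<omega>
    using that sets.sets_into_space[OF G(1)] C(2) cover deviation
    by (intro excess_risk_le_of_risk_deviation) auto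
  ultimately show ?thesis using G by auto
qed

end

theorem theorem6:
  fixes l :: "'y \<Rightarrow> 'p::euclidean_space \<Rightarrow> real"
    and A :: "('x, 'y, 'p) icl_alg set"
    and Z :: "('x \<times> 'y) measure"
    and DT :: "'task measure"
    and D :: "'task \<Rightarrow> ('x \<times> 'y) measure"
    and n T :: nat and L B \<delta> :: real
    and erm :: "(nat \<Rightarrow> nat \<Rightarrow> 'x \<times> 'y) \<Rightarrow> ('x, 'y, 'p) icl_alg"
  assumes task_dist: "prob_space DT"
    and task_kernel: "D \<in> measurable DT (prob_algebra Z)"
    and lipschitz: "\<forall>y p q. \<bar>l y p - l y q\<bar> \<le> L * norm (p - q)"
    and bounded: "\<forall>y p. 0 \<le> l y p \<and> l y p \<le> B"
    and alg_meas: "\<forall>a\<in>A. (\<lambda>s. emp_loss l n a s) \<in> borel_measurable (PiM {..<n} (\<lambda>_. Z))"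
    and T_pos: "T > 0"
    and delta: "0 < \<delta>" "\<delta> < 1"
    and erm: "\<forall>\<omega>\<in>space (source_sample_dist DT D n T).
               erm \<omega> \<in> A \<and> (\<forall>a\<in>A. icl_erm_obj l n T (erm \<omega>) \<omega> \<le> icl_erm_obj l n T a \<omega>)"
  shows "\<exists>E\<in>sets (source_sample_dist DT D n T).
           measure (source_sample_dist DT D n T) E \<ge> 1 - 2 * \<delta> \<and>
           (\<forall>\<omega>\<in>E.
              ereal (expected_task_risk l n DT D (erm \<omega>) - (INF a\<in>A. expected_task_risk l n DT D a))
              \<le> (INF \<epsilon>\<in>{\<epsilon>. \<epsilon> \<ge> 0 \<and> covering_number A (alg_dist (space Z) n) \<epsilon> \<noteq> \<infinity>}.
                   ereal (4 * L * \<epsilon> + B * sqrt (2 * ln (real (the_enat (covering_number A (alg_dist (space Z) n) \<epsilon>)) / \<delta>) / real T))))"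
proof -
  have transfer: "icl_erm_transfer l A Z DT D n T L B erm"
    by (rule icl_erm_transfer.intro) (rule assms)+
  interpret sample: prob_space "source_sample_dist DT D n T"
    by (rule icl_erm_transfer.prob_space_sample[OF transfer])
  show ?thesis
  proof (rule sample.event_le_INF_of_events_le)
    show "1 - 2 * \<delta> \<le> 1" using delta by simp
    fix \<epsilon> assume "\<epsilon> \<in> {\<epsilon>. \<epsilon> \<ge> 0 \<and> covering_number A (alg_dist (space Z) n) \<epsilon> \<noteq> \<infinity>}"
    then show "\<exists>G\<in>sample.events. 1 - 2 * \<delta> \<le> sample.prob G \<and>
      (\<forall>\<omega>\<in>G. expected_task_risk l n DT D (erm \<omega>) - (INF a\<in>A. expected_task_risk l n DT D a)
        \<le> 4 * L * \<epsilon> + B * sqrt (2 * ln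
          (real (the_enat (covering_number A (alg_dist (space Z) n) \<epsilon>)) / \<delta>) / real T))"
      using icl_erm_transfer.excess_risk_bound_at_scale[OF transfer delta] by blast
  qed
qed

end
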